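(* There is no contravariant functor $F\colon\mathsf{Ring}\to\mathsf{Set}$ whose restriction to the full subcategory $\mathsf{CommRing}$ is isomorphic to $\operatorname{Spec}$ and such that, for every ring $R$, the set $F(R)$ is in bijection with the set of prime ideals of $R$.
   Context: Rings are unital and homomorphisms preserve the identity. A (two-sided) ideal $P$ of a ring $R$ is prime if $P\neq R$ and for all two-sided ideals $I,J$ with $IJ\subseteq P$, either $I\subseteq P$ or $J\subseteq P$. $\operatorname{Spec}$ is the contravariant functor on commutative rings sending a ring to its set of prime ideals and a homomorphism $f$ to $P\mapsto f^{-1}(P)$. *)

theory Defs
  imports Complex_Main "HOL-Algebra.Ideal_Product"
begin

definition prime_ideal_nc :: "('a, 'b) ring_scheme \<Rightarrow> 'a set \<Rightarrow> bool" where
  "prime_ideal_nc R P \<longleftrightarrow> ideal P R \<and> P \<noteq> carrier R \<and>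
     (\<forall>I J. ideal I R \<longrightarrow> ideal J R \<longrightarrow> ideal_prod R I J \<subseteq> P \<longrightarrow> I \<subseteq> P \<or> J \<subseteq> P)"

definition Spec_set :: "('a, 'b) ring_scheme \<Rightarrow> 'a set set" where
  "Spec_set R = {P. prime_ideal_nc R P}"

text \<open>Morphisms of the category Ring (objects: unital rings whose carrier lives in
  the universe type 'u): unital ring homomorphisms, represented extensionally
  (undefined outside the carrier) so that a morphism is a unique HOL function.\<close>
definition ring_morph :: "('a, 'c) ring_scheme \<Rightarrow> ('b, 'd) ring_scheme \<Rightarrow> ('a \<Rightarrow> 'b) \<Rightarrow> bool" where
  "ring_morph R S h \<longleftrightarrow> h \<in> ring_hom R S \<and> h \<in> extensional (carrier R)"

definition contravariant_functor_Ring ::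
    "('u ring \<Rightarrow> 'v set) \<Rightarrow> ('u ring \<Rightarrow> 'u ring \<Rightarrow> ('u \<Rightarrow> 'u) \<Rightarrow> 'v \<Rightarrow> 'v) \<Rightarrow> bool" where
  "contravariant_functor_Ring Fo Fm \<longleftrightarrow>
     (\<forall>R S h. ring R \<longrightarrow> ring S \<longrightarrow> ring_morph R S h \<longrightarrow> Fm R S h \<in> Fo S \<rightarrow> Fo R) \<and>
     (\<forall>R. ring R \<longrightarrow> (\<forall>x\<in>Fo R. Fm R R (restrict (\<lambda>a. a) (carrier R)) x = x)) \<and>
     (\<forall>R S T h g. ring R \<longrightarrow> ring S \<longrightarrow> ring T \<longrightarrow> ring_morph R S h \<longrightarrow> ring_morph S T g \<longrightarrow>
        (\<forall>x\<in>Fo T. Fm R T (restrict (g \<circ> h) (carrier R)) x = Fm R S h (Fm S T g x)))"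

definition restricts_to_Spec ::
    "('u ring \<Rightarrow> 'v set) \<Rightarrow> ('u ring \<Rightarrow> 'u ring \<Rightarrow> ('u \<Rightarrow> 'u) \<Rightarrow> 'v \<Rightarrow> 'v)
     \<Rightarrow> ('u ring \<Rightarrow> 'v \<Rightarrow> 'u set) \<Rightarrow> bool" where
  "restricts_to_Spec Fo Fm eta \<longleftrightarrow>
     (\<forall>R. cring R \<longrightarrow> bij_betw (eta R) (Fo R) (Spec_set R)) \<and>
     (\<forall>R S h. cring R \<longrightarrow> cring S \<longrightarrow> ring_morph R S h \<longrightarrow>
        (\<forall>x\<in>Fo S. eta R (Fm R S h x) = h -` (eta S x) \<inter> carrier R))"

end

theory Submission
  imports Defs "HOL-Algebra.Subrings" "HOL-Algebra.Weak_Morphisms" "HOL-Analysis.Analysis" "HOL-Library.Z2"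
begin

text \<open>
  For a point x of F(R) and a commutative subring C of R, pulling x back along the inclusion and
  applying the natural isomorphism gives a prime of C; naturality makes these primes compatible
  with inclusions of commutative subrings. Call an idempotent e true at x when the prime on
  {0, e, 1 - e, 1} omits e. If e1, e2, e3 are orthogonal idempotents with sum 1 in a ring of
  characteristic 2, they span a commutative subring in which every prime contains exactly two of
  them, so exactly one of e1, e2, e3 is true at x. In the simple ring M_3(F_2) the zero ideal is
  prime, so F(M_3(F_2)) is not empty; but M_3(F_2) contains 28 such frames admitting no
  truth assignment of this kind (a Kochen-Specker configuration), a contradiction.
\<close>

definition exactly_one :: "bool \<Rightarrow> bool \<Rightarrow> bool \<Rightarrow> bool" where
  "exactly_one p q r \<longleftrightarrow> (p \<or> q \<or> r) \<and> \<not> (p \<and> q) \<and> \<not> (p \<and> r) \<and> \<not> (q \<and> r)"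

lemma (in cring) prime_ideal_nc_imp_primeideal:
  assumes "prime_ideal_nc R P"
  shows "primeideal P R"
  using assms divides_ideal_prod_imp_primeideal unfolding prime_ideal_nc_def by blast

lemma (in ring) zero_ideal_in_Spec_set:
  assumes one_neq_zero: "\<one> \<noteq> \<zero>" and simple: "\<And>I. ideal I R \<Longrightarrow> I \<noteq> {\<zero>} \<Longrightarrow> \<one> \<in> I"
  shows "{\<zero>} \<in> Spec_set R"
  unfolding Spec_set_def prime_ideal_nc_def
proof (intro CollectI conjI allI impI zeroideal)
  show "{\<zero>} \<noteq> carrier R" using one_neq_zero one_closed by blast
  fix I J assume I: "ideal I R" and J: "ideal J R" and IJ: "ideal_prod R I J \<subseteq> {\<zero>}"
  show "I \<subseteq> {\<zero>} \<or> J \<subseteq> {\<zero>}"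
  proof (rule ccontr)
    assume "\<not> ?thesis"
    then have "\<one> \<in> I" "\<one> \<in> J" using simple I J by blast+
    then have "\<one> \<otimes> \<one> \<in> ideal_prod R I J" by (rule ideal_prod.prod)
    then show False using IJ one_neq_zero by auto
  qed
qed

lemma ring_iso_preserves_simple:
  assumes "ring M" "ring S" "h \<in> ring_iso M S"
    and simple: "\<And>I. ideal I M \<Longrightarrow> I \<noteq> {\<zero>\<^bsub>M\<^esub>} \<Longrightarrow> \<one>\<^bsub>M\<^esub> \<in> I"
    and J: "ideal J S" "J \<noteq> {\<zero>\<^bsub>S\<^esub>}"
  shows "\<one>\<^bsub>S\<^esub> \<in> J"
proof -
  interpret h: ring_hom_ring M S h
    using assms(1-3) by (intro ring_hom_ringI2) (auto simp: ring_iso_def)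
  interpret J: ideal J S by (rule J(1))
  let ?I = "{r \<in> carrier M. h r \<in> J}"
  obtain s where s: "s \<in> J" "s \<noteq> \<zero>\<^bsub>S\<^esub>" using J(2) J.zero_closed by auto
  moreover have "J \<subseteq> h ` carrier M" using J.a_subset assms(3) by (simp add: ring_iso_def bij_betw_def)
  ultimately obtain r where r: "r \<in> carrier M" "h r = s" by blast
  then have "r \<in> ?I" "r \<noteq> \<zero>\<^bsub>M\<^esub>" using s h.hom_zero by auto
  then have "\<one>\<^bsub>M\<^esub> \<in> ?I" using simple[OF h.ideal_vimage[OF J(1)]] by blast
  then show ?thesis using h.hom_one by simp
qed

definition bool_smult :: "('a, 'b) ring_scheme \<Rightarrow> bool \<Rightarrow> 'a \<Rightarrow> 'a" where
  "bool_smult R c x = (if c then x else \<zero>\<^bsub>R\<^esub>)"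

definition frame_elem :: "('a, 'b) ring_scheme \<Rightarrow> 'a \<Rightarrow> 'a \<Rightarrow> 'a \<Rightarrow> bool \<Rightarrow> bool \<Rightarrow> bool \<Rightarrow> 'a" where
  "frame_elem R e1 e2 e3 a b c = bool_smult R a e1 \<oplus>\<^bsub>R\<^esub> bool_smult R b e2 \<oplus>\<^bsub>R\<^esub> bool_smult R c e3"

definition frame_span :: "('a, 'b) ring_scheme \<Rightarrow> 'a \<Rightarrow> 'a \<Rightarrow> 'a \<Rightarrow> 'a set" where
  "frame_span R e1 e2 e3 = {frame_elem R e1 e2 e3 a b c | a b c. True}"

lemma (in ring) bool_smult_closed: "x \<in> carrier R \<Longrightarrow> bool_smult R c x \<in> carrier R"
  by (simp add: bool_smult_def)

lemma (in ring) bool_smult_mult: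
  "x \<in> carrier R \<Longrightarrow> y \<in> carrier R \<Longrightarrow> bool_smult R c x \<otimes> bool_smult R d y = bool_smult R (c \<and> d) (x \<otimes> y)"
  by (cases c; cases d) (simp_all add: bool_smult_def)

lemma bool_smult_zero: "bool_smult R c \<zero>\<^bsub>R\<^esub> = \<zero>\<^bsub>R\<^esub>"
  by (simp add: bool_smult_def)

lemma (in ring) frame_span_subset:
  assumes H: "subring H R" and "e1 \<in> H" "e2 \<in> H" "e3 \<in> H"
  shows "frame_span R e1 e2 e3 \<subseteq> H"
proof -
  have "bool_smult R c e \<in> H" if "e \<in> H" for c e using that subringE(2)[OF H] by (simp add: bool_smult_def)
  then show ?thesis using assms subringE(7)[OF H] by (auto simp: frame_span_def frame_elem_def)
qed

locale idempotent_frame = ring R for R (structure) +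
  fixes e1 e2 e3
  assumes char_two: "\<And>x. x \<in> carrier R \<Longrightarrow> x \<oplus> x = \<zero>"
    and frame_closed: "e1 \<in> carrier R" "e2 \<in> carrier R" "e3 \<in> carrier R"
    and orthogonal: "e1 \<otimes> e2 = \<zero>" "e2 \<otimes> e1 = \<zero>" "e1 \<otimes> e3 = \<zero>"
      "e3 \<otimes> e1 = \<zero>" "e2 \<otimes> e3 = \<zero>" "e3 \<otimes> e2 = \<zero>"
    and sum_one: "e1 \<oplus> e2 \<oplus> e3 = \<one>"
begin

lemma idempotent: "e1 \<otimes> e1 = e1" "e2 \<otimes> e2 = e2" "e3 \<otimes> e3 = e3"
proof -
  have "e \<otimes> \<one> = e \<otimes> e1 \<oplus> e \<otimes> e2 \<oplus> e \<otimes> e3" if "e \<in> carrier R" for e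
    using that frame_closed by (simp flip: sum_one add: r_distr)
  from this[OF frame_closed(1)] this[OF frame_closed(2)] this[OF frame_closed(3)]
  show "e1 \<otimes> e1 = e1" "e2 \<otimes> e2 = e2" "e3 \<otimes> e3 = e3"
    using frame_closed orthogonal by simp_all
qed

lemma bool_smult_add: "x \<in> carrier R \<Longrightarrow> bool_smult R c x \<oplus> bool_smult R d x = bool_smult R (c \<noteq> d) x"
  by (cases c; cases d) (simp_all add: bool_smult_def char_two)

lemma frame_elem_closed: "frame_elem R e1 e2 e3 a b c \<in> carrier R"
  using frame_closed by (simp add: frame_elem_def bool_smult_closed)

lemma frame_elem_add:
  "frame_elem R e1 e2 e3 a b c \<oplus> frame_elem R e1 e2 e3 a' b' c'
     = frame_elem R e1 e2 e3 (a \<noteq> a') (b \<noteq> b') (c \<noteq> c')"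
proof -
  have "(x1 \<oplus> x2 \<oplus> x3) \<oplus> (y1 \<oplus> y2 \<oplus> y3) = (x1 \<oplus> y1) \<oplus> (x2 \<oplus> y2) \<oplus> (x3 \<oplus> y3)"
    if "x1 \<in> carrier R" "x2 \<in> carrier R" "x3 \<in> carrier R"
      "y1 \<in> carrier R" "y2 \<in> carrier R" "y3 \<in> carrier R" for x1 x2 x3 y1 y2 y3
    using that by (simp add: a_ac)
  then show ?thesis
    unfolding frame_elem_def using frame_closed by (simp add: bool_smult_closed bool_smult_add)
qed

lemma frame_elem_mult:
  "frame_elem R e1 e2 e3 a b c \<otimes> frame_elem R e1 e2 e3 a' b' c'
     = frame_elem R e1 e2 e3 (a \<and> a') (b \<and> b') (c \<and> c')"
  unfolding frame_elem_def using frame_closed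
  by (simp add: bool_smult_closed l_distr r_distr bool_smult_mult idempotent orthogonal bool_smult_zero)

lemma frame_in_span: "e1 \<in> frame_span R e1 e2 e3" "e2 \<in> frame_span R e1 e2 e3" "e3 \<in> frame_span R e1 e2 e3"
proof -
  have "e1 = frame_elem R e1 e2 e3 True False False" "e2 = frame_elem R e1 e2 e3 False True False"
    "e3 = frame_elem R e1 e2 e3 False False True"
    using frame_closed by (simp_all add: frame_elem_def bool_smult_def)
  then show "e1 \<in> frame_span R e1 e2 e3" "e2 \<in> frame_span R e1 e2 e3" "e3 \<in> frame_span R e1 e2 e3"
    unfolding frame_span_def by blast+
qed

lemma subring_frame_span: "subring (frame_span R e1 e2 e3) R"
proof (rule subringI)
  show "frame_span R e1 e2 e3 \<subseteq> carrier R"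
    using frame_elem_closed by (auto simp: frame_span_def)
  have "\<one> = frame_elem R e1 e2 e3 True True True"
    using frame_closed by (simp add: frame_elem_def bool_smult_def sum_one)
  then show "\<one> \<in> frame_span R e1 e2 e3" unfolding frame_span_def by blast
next
  fix h assume h: "h \<in> frame_span R e1 e2 e3"
  then have "h \<in> carrier R" using frame_elem_closed by (auto simp: frame_span_def)
  then have "\<ominus> h = h" using char_two by (intro minus_equality) auto
  then show "\<ominus> h \<in> frame_span R e1 e2 e3" using h by simp
next
  fix h1 h2 assume "h1 \<in> frame_span R e1 e2 e3" "h2 \<in> frame_span R e1 e2 e3"
  then show "h1 \<otimes> h2 \<in> frame_span R e1 e2 e3" "h1 \<oplus> h2 \<in> frame_span R e1 e2 e3"
    by (auto simp: frame_span_def frame_elem_mult frame_elem_add) blast+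
qed

lemma cring_frame_span: "cring (R\<lparr>carrier := frame_span R e1 e2 e3\<rparr>)"
proof -
  have "subcring (frame_span R e1 e2 e3) R"
  proof (rule subcringI[OF subring_frame_span])
    fix h1 h2 assume "h1 \<in> frame_span R e1 e2 e3" "h2 \<in> frame_span R e1 e2 e3"
    then show "h1 \<otimes> h2 = h2 \<otimes> h1" by (auto simp: frame_span_def frame_elem_mult conj_commute)
  qed
  then show ?thesis using subcring_iff subringE(1)[OF subring_frame_span] by blast
qed

lemma prime_frame_span_exactly_one:
  assumes "prime_ideal_nc (R\<lparr>carrier := frame_span R e1 e2 e3\<rparr>) P"
  shows "exactly_one (e1 \<notin> P) (e2 \<notin> P) (e3 \<notin> P)"
proof -
  let ?C = "R\<lparr>carrier := frame_span R e1 e2 e3\<rparr>"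
  interpret C: cring ?C by (rule cring_frame_span)
  interpret P: primeideal P ?C by (rule C.prime_ideal_nc_imp_primeideal[OF assms])
  have e: "e1 \<in> carrier ?C" "e2 \<in> carrier ?C" "e3 \<in> carrier ?C" using frame_in_span by simp_all
  have "\<not> (e1 \<in> P \<and> e2 \<in> P \<and> e3 \<in> P)"
  proof
    assume "e1 \<in> P \<and> e2 \<in> P \<and> e3 \<in> P"
    then have "e1 \<oplus>\<^bsub>?C\<^esub> e2 \<oplus>\<^bsub>?C\<^esub> e3 \<in> P" by (intro P.a_closed) auto
    then have "\<one>\<^bsub>?C\<^esub> \<in> P" using sum_one by simp
    then show False using P.I_notcarr P.one_imp_carrier by simp
  qed
  moreover have "x \<in> P \<or> y \<in> P" if "x \<in> carrier ?C" "y \<in> carrier ?C" "x \<otimes> y = \<zero>" for x y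
    using P.I_prime[OF that(1,2)] that(3) P.zero_closed by simp
  ultimately show ?thesis
    unfolding exactly_one_def using e orthogonal by blast
qed

end

lemma (in ring) idempotent_frame_complement:
  assumes char_two: "\<And>x. x \<in> carrier R \<Longrightarrow> x \<oplus> x = \<zero>" and e: "e \<in> carrier R" "e \<otimes> e = e"
  shows "idempotent_frame R e (\<one> \<ominus> e) \<zero>"
proof -
  have "e \<oplus> (\<one> \<oplus> \<ominus> e) = \<one>"
    using e(1) by (metis add.inv_closed one_closed a_lcomm r_neg r_zero)
  then show ?thesis
    by unfold_locales
      (use e char_two in \<open>simp_all add: a_minus_def r_distr l_distr r_minus l_minus r_neg l_neg\<close>)
qed

lemma idempotent_frame_image:
  assumes "idempotent_frame R e1 e2 e3" "ring S" "h \<in> ring_hom R S" "h ` carrier R = carrier S"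
  shows "idempotent_frame S (h e1) (h e2) (h e3)"
proof -
  interpret idempotent_frame R e1 e2 e3 by fact
  interpret h: ring_hom_ring R S h using assms(2,3) ring_axioms by (intro ring_hom_ringI2)
  show ?thesis
  proof (unfold_locales)
    fix y assume "y \<in> carrier S"
    then obtain x where "x \<in> carrier R" "y = h x" using assms(4) by blast
    then show "y \<oplus>\<^bsub>S\<^esub> y = \<zero>\<^bsub>S\<^esub>" using char_two by (simp flip: h.hom_add)
  qed (use frame_closed orthogonal sum_one in \<open>simp_all flip: h.hom_mult h.hom_add\<close>)
qed

lemma idempotent_frame_image_ring:
  assumes "idempotent_frame M e1 e2 e3" "inj_on g (carrier M)"
  shows "idempotent_frame (image_ring g M) (g e1) (g e2) (g e3)"
proof (rule idempotent_frame_image[OF assms(1)])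
  have "ring M" using assms(1) by (rule idempotent_frame.axioms(1))
  then show "ring (image_ring g M)" using assms(2) by (rule ring.inj_imp_image_ring_is_ring)
  show "g \<in> ring_hom M (image_ring g M)"
    using inj_imp_image_ring_iso[OF assms(2)] by (simp add: ring_iso_def)
  show "g ` carrier M = carrier (image_ring g M)" by (simp add: image_ring_carrier)
qed

lemma ring_morph_inclusion:
  assumes "B \<subseteq> carrier T" "\<one>\<^bsub>T\<^esub> \<in> B"
    "\<And>x y. x \<in> B \<Longrightarrow> y \<in> B \<Longrightarrow> x \<otimes>\<^bsub>T\<^esub> y \<in> B"
    "\<And>x y. x \<in> B \<Longrightarrow> y \<in> B \<Longrightarrow> x \<oplus>\<^bsub>T\<^esub> y \<in> B"
  shows "ring_morph (T\<lparr>carrier := B\<rparr>) T (restrict (\<lambda>a. a) B)"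
  using assms unfolding ring_morph_def ring_hom_def by auto

definition induced_prime ::
    "('u ring \<Rightarrow> 'u ring \<Rightarrow> ('u \<Rightarrow> 'u) \<Rightarrow> 'v \<Rightarrow> 'v) \<Rightarrow> ('u ring \<Rightarrow> 'v \<Rightarrow> 'u set) \<Rightarrow>
      'u ring \<Rightarrow> 'v \<Rightarrow> 'u set \<Rightarrow> 'u set" where
  "induced_prime Fm eta R x A = eta (R\<lparr>carrier := A\<rparr>) (Fm (R\<lparr>carrier := A\<rparr>) R (restrict (\<lambda>a. a) A) x)"

definition idempotent_value ::
    "('u ring \<Rightarrow> 'u ring \<Rightarrow> ('u \<Rightarrow> 'u) \<Rightarrow> 'v \<Rightarrow> 'v) \<Rightarrow> ('u ring \<Rightarrow> 'v \<Rightarrow> 'u set) \<Rightarrow>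
      'u ring \<Rightarrow> 'v \<Rightarrow> 'u \<Rightarrow> bool" where
  "idempotent_value Fm eta R x e \<longleftrightarrow>
     e \<notin> induced_prime Fm eta R x (frame_span R e (\<one>\<^bsub>R\<^esub> \<ominus>\<^bsub>R\<^esub> e) \<zero>\<^bsub>R\<^esub>)"

context
  fixes Fo :: "'u ring \<Rightarrow> 'v set" and Fm eta
  assumes F_functor: "contravariant_functor_Ring Fo Fm" and natural: "restricts_to_Spec Fo Fm eta"
begin

lemma Fm_closed: "ring R \<Longrightarrow> ring S \<Longrightarrow> ring_morph R S h \<Longrightarrow> y \<in> Fo S \<Longrightarrow> Fm R S h y \<in> Fo R"
  using F_functor unfolding contravariant_functor_Ring_def by blast

lemma Fm_comp:
  "ring R \<Longrightarrow> ring S \<Longrightarrow> ring T \<Longrightarrow> ring_morph R S h \<Longrightarrow> ring_morph S T g \<Longrightarrow> y \<in> Fo T \<Longrightarrow>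
    Fm R T (restrict (g \<circ> h) (carrier R)) y = Fm R S h (Fm S T g y)"
  using F_functor unfolding contravariant_functor_Ring_def by blast

lemma eta_natural:
  "cring R \<Longrightarrow> cring S \<Longrightarrow> ring_morph R S h \<Longrightarrow> y \<in> Fo S \<Longrightarrow> eta R (Fm R S h y) = h -` eta S y \<inter> carrier R"
  using natural unfolding restricts_to_Spec_def by blast

lemma eta_in_Spec_set: "cring R \<Longrightarrow> y \<in> Fo R \<Longrightarrow> eta R y \<in> Spec_set R"
  using natural unfolding restricts_to_Spec_def bij_betw_def by blast

lemma induced_prime_in_Spec_set:
  assumes "ring R" "x \<in> Fo R" "subring A R" "cring (R\<lparr>carrier := A\<rparr>)"
  shows "induced_prime Fm eta R x A \<in> Spec_set (R\<lparr>carrier := A\<rparr>)"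
proof -
  have "ring_morph (R\<lparr>carrier := A\<rparr>) R (restrict (\<lambda>a. a) A)"
    by (rule ring_morph_inclusion) (use subringE[OF assms(3)] in auto)
  then show ?thesis unfolding induced_prime_def
    using assms Fm_closed eta_in_Spec_set cring.axioms(1) by blast
qed

lemma induced_prime_restrict:
  assumes R: "ring R" and x: "x \<in> Fo R"
    and A: "subring A R" "cring (R\<lparr>carrier := A\<rparr>)"
    and B: "subring B R" "cring (R\<lparr>carrier := B\<rparr>)" and "B \<subseteq> A"
  shows "induced_prime Fm eta R x B = induced_prime Fm eta R x A \<inter> B"
proof -
  let ?A = "R\<lparr>carrier := A\<rparr>" and ?B = "R\<lparr>carrier := B\<rparr>"
  let ?incl_A = "restrict (\<lambda>a. a) A" and ?incl_B = "restrict (\<lambda>a. a) B"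
  have rings: "ring ?A" "ring ?B" using A B cring.axioms(1) by blast+
  have incl_A: "ring_morph ?A R ?incl_A"
    by (rule ring_morph_inclusion) (use subringE[OF A(1)] in auto)
  have incl_BA: "ring_morph ?B ?A ?incl_B"
    using ring_morph_inclusion[of B ?A] subringE[OF B(1)] \<open>B \<subseteq> A\<close> by auto
  have "restrict (?incl_A \<circ> ?incl_B) (carrier ?B) = ?incl_B" using \<open>B \<subseteq> A\<close> by (auto simp: fun_eq_iff)
  then have "induced_prime Fm eta R x B = eta ?B (Fm ?B ?A ?incl_B (Fm ?A R ?incl_A x))"
    using Fm_comp[OF rings(2,1) R incl_BA incl_A x] unfolding induced_prime_def by simp
  also have "\<dots> = ?incl_B -` induced_prime Fm eta R x A \<inter> B"
    unfolding induced_prime_def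
    by (rule eta_natural[OF B(2) A(2) incl_BA Fm_closed[OF rings(1) R incl_A x], simplified])
  also have "\<dots> = induced_prime Fm eta R x A \<inter> B" by (auto simp: restrict_apply)
  finally show ?thesis .
qed

lemma idempotent_value_exactly_one:
  assumes x: "x \<in> Fo R" and frame: "idempotent_frame R e1 e2 e3"
  shows "exactly_one (idempotent_value Fm eta R x e1) (idempotent_value Fm eta R x e2)
           (idempotent_value Fm eta R x e3)"
proof -
  interpret idempotent_frame R e1 e2 e3 by (rule frame)
  let ?A = "frame_span R e1 e2 e3"
  let ?P = "induced_prime Fm eta R x ?A"
  have value_iff: "idempotent_value Fm eta R x e \<longleftrightarrow> e \<notin> ?P" if e: "e \<in> ?A" "e \<otimes>\<^bsub>R\<^esub> e = e" for e
  proof -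
    let ?D = "frame_span R e (\<one>\<^bsub>R\<^esub> \<ominus>\<^bsub>R\<^esub> e) \<zero>\<^bsub>R\<^esub>"
    have "e \<in> carrier R" using e subringE(1)[OF subring_frame_span] by auto
    then interpret E: idempotent_frame R e "\<one>\<^bsub>R\<^esub> \<ominus>\<^bsub>R\<^esub> e" "\<zero>\<^bsub>R\<^esub>"
      using e(2) char_two by (intro idempotent_frame_complement)
    have "\<one>\<^bsub>R\<^esub> \<ominus>\<^bsub>R\<^esub> e \<in> ?A"
      unfolding a_minus_def using subringE(3,5,7)[OF subring_frame_span] e(1) by blast
    then have "?D \<subseteq> ?A"
      using frame_span_subset[OF subring_frame_span] subringE(2)[OF subring_frame_span] e(1) by blast
    then have "induced_prime Fm eta R x ?D = ?P \<inter> ?D"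
      by (rule induced_prime_restrict[OF ring_axioms x subring_frame_span cring_frame_span
            E.subring_frame_span E.cring_frame_span])
    then show ?thesis unfolding idempotent_value_def using E.frame_in_span(1) by auto
  qed
  have "?P \<in> Spec_set (R\<lparr>carrier := ?A\<rparr>)"
    by (rule induced_prime_in_Spec_set[OF ring_axioms x subring_frame_span cring_frame_span])
  then have "exactly_one (e1 \<notin> ?P) (e2 \<notin> ?P) (e3 \<notin> ?P)"
    using prime_frame_span_exactly_one unfolding Spec_set_def by blast
  then show ?thesis using value_iff frame_in_span idempotent by simp
qed

end

definition matrix_ring :: "('a::comm_ring_1^'n^'n) ring" where
  "matrix_ring = \<lparr>carrier = UNIV, monoid.mult = (**), one = mat 1, zero = 0, add = (+)\<rparr>"

lemma carrier_matrix_ring: "carrier matrix_ring = UNIV"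
  by (simp add: matrix_ring_def)

lemma matrix_add_rdistrib: "(B + C) ** A = B ** A + C ** (A :: 'a::semiring_1^'n^'n)"
  by (simp add: vec_eq_iff matrix_matrix_mult_def distrib_right sum.distrib)

lemma ring_matrix_ring: "ring matrix_ring"
proof (rule ringI)
  show "abelian_group matrix_ring"
    by (rule abelian_groupI) (auto simp: matrix_ring_def add.assoc add.commute intro: exI[of _ "- _"])
  show "monoid matrix_ring"
    by (rule monoidI) (auto simp: matrix_ring_def matrix_mul_assoc)
qed (auto simp: matrix_ring_def matrix_add_ldistrib matrix_add_rdistrib)

definition matrix_unit :: "'n::finite \<Rightarrow> 'n \<Rightarrow> 'a::semiring_1^'n^'n" where
  "matrix_unit i j = (\<chi> r s. if r = i \<and> s = j then 1 else 0)"

lemma matrix_unit_mult_left: "matrix_unit k i ** A = (\<chi> r s. if r = k then A$i$s else 0)"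
  by (simp add: vec_eq_iff matrix_matrix_mult_def matrix_unit_def if_distrib[of "\<lambda>x. x * _"]
      sum.delta cong: if_cong)

lemma matrix_unit_mult_right: "A ** matrix_unit j l = (\<chi> r s. if s = l then A$r$j else 0)"
  by (auto simp: vec_eq_iff matrix_matrix_mult_def matrix_unit_def if_distrib[of "\<lambda>x. _ * x"]
      sum.delta' cong: if_cong)

lemma sum_matrix_unit_sandwich: "(\<Sum>k\<in>UNIV. matrix_unit k i ** A ** matrix_unit j k) = mat (A$i$j)"
  by (simp add: matrix_unit_mult_left matrix_unit_mult_right vec_eq_iff mat_def sum_component
      if_distrib[of "\<lambda>x. x $ _"] sum.delta cong: if_cong)

lemma mat_mult_mat: "mat a ** mat b = (mat (a * b) :: 'a::comm_ring_1^'n^'n)"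
  by (simp add: vec_eq_iff matrix_matrix_mult_def mat_def if_distrib[of "\<lambda>x. x * _"] sum.delta cong: if_cong)

lemma matrix_ring_ideal_closed:
  assumes "ideal I (matrix_ring :: ('a::comm_ring_1^'n^'n) ring)"
  shows "0 \<in> I" and "A \<in> I \<Longrightarrow> B \<in> I \<Longrightarrow> A + B \<in> I" and "A \<in> I \<Longrightarrow> X ** A ** Y \<in> I"
proof -
  interpret I: ideal I matrix_ring by fact
  have sub: "additive_subgroup I matrix_ring" by (rule ideal.axioms(1)[OF assms])
  show "0 \<in> I" using additive_subgroup.zero_closed[OF sub] by (simp add: matrix_ring_def)
  show "A \<in> I \<Longrightarrow> B \<in> I \<Longrightarrow> A + B \<in> I"
    using additive_subgroup.a_closed[OF sub] by (simp add: matrix_ring_def)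
  show "X ** A ** Y \<in> I" if "A \<in> I"
    using I.I_r_closed[OF I.I_l_closed[OF that, of X], of Y] by (simp add: matrix_ring_def)
qed

lemma matrix_ring_ideal_sum_closed:
  assumes "ideal I matrix_ring" "\<And>k. f k \<in> I"
  shows "sum f S \<in> I"
  by (induction S rule: infinite_finite_induct)
    (simp_all add: assms(2) matrix_ring_ideal_closed[OF assms(1)])

lemma matrix_ring_simple:
  fixes I :: "('a::field^'n^'n) set"
  assumes "ideal I matrix_ring" "I \<noteq> {\<zero>\<^bsub>matrix_ring\<^esub>}"
  shows "\<one>\<^bsub>matrix_ring\<^esub> \<in> I"
proof -
  obtain A where "A \<in> I" "A \<noteq> 0"
    using assms(2) matrix_ring_ideal_closed(1)[OF assms(1)] by (auto simp: matrix_ring_def)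
  then obtain i j where A: "A \<in> I" "A$i$j \<noteq> 0" by (auto simp: vec_eq_iff)
  then have "(\<Sum>k\<in>UNIV. matrix_unit k i ** A ** matrix_unit j k) \<in> I"
    by (intro matrix_ring_ideal_sum_closed[OF assms(1)] matrix_ring_ideal_closed(3)[OF assms(1)])
  then have "mat (inverse (A$i$j)) ** mat (A$i$j) ** mat 1 \<in> I"
    unfolding sum_matrix_unit_sandwich by (rule matrix_ring_ideal_closed(3)[OF assms(1)])
  then show ?thesis using A(2) by (simp add: mat_mult_mat matrix_ring_def)
qed

lemma matrix_ring_one_neq_zero: "\<one>\<^bsub>matrix_ring :: ('a::comm_ring_1^'n^'n) ring\<^esub> \<noteq> \<zero>\<^bsub>matrix_ring\<^esub>"
  by (simp add: matrix_ring_def vec_eq_iff mat_def)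

lemma zero_ideal_in_Spec_set_image_matrix_ring:
  fixes g :: "'a::field^'n^'n \<Rightarrow> 'u"
  assumes "inj_on g (carrier matrix_ring)"
  shows "{\<zero>\<^bsub>image_ring g matrix_ring\<^esub>} \<in> Spec_set (image_ring g matrix_ring)"
proof -
  let ?R = "image_ring g matrix_ring"
  have R: "ring ?R" using assms by (rule ring.inj_imp_image_ring_is_ring[OF ring_matrix_ring])
  have "\<one>\<^bsub>?R\<^esub> \<noteq> \<zero>\<^bsub>?R\<^esub>"
    using matrix_ring_one_neq_zero inj_on_eq_iff[OF assms]
    by (simp add: image_ring_one image_ring_zero carrier_matrix_ring)
  moreover have "\<And>J. ideal J ?R \<Longrightarrow> J \<noteq> {\<zero>\<^bsub>?R\<^esub>} \<Longrightarrow> \<one>\<^bsub>?R\<^esub> \<in> J"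
    by (rule ring_iso_preserves_simple[OF ring_matrix_ring R inj_imp_image_ring_iso[OF assms]
          matrix_ring_simple])
  ultimately show ?thesis by (rule ring.zero_ideal_in_Spec_set[OF R])
qed

lemma idempotent_frame_bit_matrixI:
  fixes A B C :: "bit^'n^'n"
  assumes "A ** B = 0" "B ** A = 0" "A ** C = 0" "C ** A = 0" "B ** C = 0" "C ** B = 0"
    and "A + B + C = mat 1"
  shows "idempotent_frame matrix_ring A B C"
  by (intro idempotent_frame.intro idempotent_frame_axioms.intro ring_matrix_ring)
    (use assms in \<open>auto simp: matrix_ring_def vec_eq_iff\<close>)

instance bit :: finite
proof
  have "UNIV = {0 :: bit, 1}" by (auto intro: bit.exhaust)
  then show "finite (UNIV :: bit set)" by (metis finite.emptyI finite.insertI)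
qed

abbreviation mat3 :: "bit \<Rightarrow> bit \<Rightarrow> bit \<Rightarrow> bit \<Rightarrow> bit \<Rightarrow> bit \<Rightarrow> bit \<Rightarrow> bit \<Rightarrow> bit \<Rightarrow> bit^3^3" where
  "mat3 a b c d e f g h i \<equiv> vector [vector [a, b, c], vector [d, e, f], vector [g, h, i]]"

lemma mat3_mult:
  "mat3 a b c d e f g h i ** mat3 a' b' c' d' e' f' g' h' i' =
    mat3 (a*a' + b*d' + c*g') (a*b' + b*e' + c*h') (a*c' + b*f' + c*i')
         (d*a' + e*d' + f*g') (d*b' + e*e' + f*h') (d*c' + e*f' + f*i')
         (g*a' + h*d' + i*g') (g*b' + h*e' + i*h') (g*c' + h*f' + i*i')"
  by (simp add: vec_eq_iff forall_3 sum_3 matrix_matrix_mult_def)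

lemma mat3_add:
  "mat3 a b c d e f g h i + mat3 a' b' c' d' e' f' g' h' i' =
    mat3 (a+a') (b+b') (c+c') (d+d') (e+e') (f+f') (g+g') (h+h') (i+i')"
  by (simp add: vec_eq_iff forall_3)

lemma mat3_zero: "(0 :: bit^3^3) = mat3 0 0 0 0 0 0 0 0 0"
  by (simp add: vec_eq_iff forall_3)

lemma mat3_one: "(mat 1 :: bit^3^3) = mat3 1 0 0 0 1 0 0 0 1"
  by (simp add: vec_eq_iff forall_3 mat_def)

definition KS_frames :: "((bit^3^3) \<times> (bit^3^3) \<times> (bit^3^3)) list" where
  "KS_frames =
    [(mat3 0 0 0 0 0 0 0 0 1, mat3 0 0 0 0 1 0 0 0 0, mat3 1 0 0 0 0 0 0 0 0),
     (mat3 0 0 0 0 0 0 0 0 1, mat3 0 0 0 1 1 0 0 0 0, mat3 1 0 0 1 0 0 0 0 0),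
     (mat3 0 0 0 0 0 0 0 0 1, mat3 0 1 0 0 1 0 0 0 0, mat3 1 1 0 0 0 0 0 0 0),
     (mat3 0 0 0 0 0 0 0 1 1, mat3 0 0 0 0 1 0 0 1 0, mat3 1 0 0 0 0 0 0 0 0),
     (mat3 0 0 0 0 0 0 0 1 1, mat3 0 0 0 1 1 0 1 1 0, mat3 1 0 0 1 0 0 1 0 0),
     (mat3 0 0 0 0 0 0 0 1 1, mat3 0 1 0 0 1 0 0 1 0, mat3 1 1 0 0 0 0 0 0 0),
     (mat3 0 0 0 0 0 0 1 0 1, mat3 0 0 0 0 1 0 0 0 0, mat3 1 0 0 0 0 0 1 0 0),
     (mat3 0 0 0 0 0 0 1 0 1, mat3 0 0 0 1 1 0 0 0 0, mat3 1 0 0 1 0 0 1 0 0),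
     (mat3 0 0 0 0 0 0 1 0 1, mat3 0 1 0 0 1 0 0 1 0, mat3 1 1 0 0 0 0 1 1 0),
     (mat3 0 0 0 0 0 0 1 1 1, mat3 0 0 0 0 1 0 0 1 0, mat3 1 0 0 0 0 0 1 0 0),
     (mat3 0 0 0 0 0 0 1 1 1, mat3 0 0 0 1 1 0 1 1 0, mat3 1 0 0 1 0 0 0 0 0),
     (mat3 0 0 0 0 0 0 1 1 1, mat3 0 1 0 0 1 0 0 0 0, mat3 1 1 0 0 0 0 1 1 0),
     (mat3 0 0 0 0 0 1 0 0 1, mat3 0 0 0 0 1 1 0 0 0, mat3 1 0 0 0 0 0 0 0 0),
     (mat3 0 0 0 0 0 1 0 0 1, mat3 0 0 0 1 1 1 0 0 0, mat3 1 0 0 1 0 0 0 0 0),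
     (mat3 0 0 0 0 0 1 0 0 1, mat3 0 1 1 0 1 1 0 0 0, mat3 1 1 1 0 0 0 0 0 0),
     (mat3 0 0 0 0 1 0 0 0 0, mat3 0 0 1 0 0 0 0 0 1, mat3 1 0 1 0 0 0 0 0 0),
     (mat3 0 0 0 0 1 0 0 1 0, mat3 0 1 1 0 0 0 0 1 1, mat3 1 1 1 0 0 0 0 0 0),
     (mat3 0 0 0 0 1 1 0 0 0, mat3 0 0 0 1 0 1 1 0 1, mat3 1 0 0 1 0 0 1 0 0),
     (mat3 0 0 0 0 1 1 0 0 0, mat3 0 0 1 0 0 1 0 0 1, mat3 1 0 1 0 0 0 0 0 0),
     (mat3 0 0 0 1 0 1 1 0 1, mat3 0 0 0 1 1 1 0 0 0, mat3 1 0 0 0 0 0 1 0 0),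
     (mat3 0 0 0 1 0 1 1 0 1, mat3 0 1 1 0 0 0 0 1 1, mat3 1 1 1 1 1 1 1 1 1),
     (mat3 0 0 0 1 1 0 0 0 0, mat3 0 0 1 0 0 1 0 0 1, mat3 1 0 1 1 0 1 0 0 0),
     (mat3 0 0 0 1 1 0 1 1 0, mat3 0 1 1 0 1 1 0 0 0, mat3 1 1 1 1 1 1 1 1 1),
     (mat3 0 0 0 1 1 1 0 0 0, mat3 0 0 1 0 0 0 0 0 1, mat3 1 0 1 1 0 1 0 0 0),
     (mat3 0 0 1 0 0 0 0 0 1, mat3 0 1 0 0 1 0 0 0 0, mat3 1 1 1 0 0 0 0 0 0),
     (mat3 0 0 1 0 0 1 0 0 1, mat3 0 1 1 0 1 1 0 0 0, mat3 1 1 0 0 0 0 0 0 0),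
     (mat3 0 1 0 0 1 0 0 1 0, mat3 0 1 1 0 0 0 0 1 1, mat3 1 0 1 0 0 0 0 0 0),
     (mat3 1 0 1 1 0 1 0 0 0, mat3 1 1 0 0 0 0 1 1 0, mat3 1 1 1 1 1 1 1 1 1)]"

lemma KS_frames_idempotent_frame: "\<forall>(A, B, C) \<in> set KS_frames. idempotent_frame matrix_ring A B C"
proof -
  have "\<forall>(A, B, C) \<in> set KS_frames. A ** B = 0 \<and> B ** A = 0 \<and> A ** C = 0 \<and> C ** A = 0 \<and>
      B ** C = 0 \<and> C ** B = 0 \<and> A + B + C = mat 1"
    unfolding KS_frames_def by (simp del: vector_3 add: mat3_mult mat3_add mat3_zero mat3_one)
  then show ?thesis using idempotent_frame_bit_matrixI by fast
qed

lemma KS_frames_no_exactly_one_valuation: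
  "\<not> (\<forall>(A, B, C) \<in> set KS_frames. exactly_one (v A) (v B) (v C))"
  unfolding KS_frames_def list.set ball_simps prod.case exactly_one_def by sat

text \<open>The hypothesis of the theorem on the universe 'u serves only to fit a copy of M_3(F_2) into 'u.\<close>

lemma inj_from_countable:
  assumes "\<exists>f :: complex \<Rightarrow> 'u. inj f"
  obtains g :: "'a::countable \<Rightarrow> 'u" where "inj g"
proof -
  obtain f :: "complex \<Rightarrow> 'u" where "inj f" using assms by blast
  then have "inj (f \<circ> of_nat \<circ> to_nat)" by (intro inj_compose inj_of_nat inj_to_nat)
  then show ?thesis using that by blast
qed

theorem corollary4p4:
  assumes "\<exists>f :: complex \<Rightarrow> 'u. inj f"
  shows "\<not> (\<exists>(Fo :: 'u ring \<Rightarrow> 'v set) Fm eta.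
              contravariant_functor_Ring Fo Fm \<and>
              restricts_to_Spec Fo Fm eta \<and>
              (\<forall>R. ring R \<longrightarrow> (\<exists>b. bij_betw b (Fo R) (Spec_set R))))"
proof
  assume "\<exists>(Fo :: 'u ring \<Rightarrow> 'v set) Fm eta. contravariant_functor_Ring Fo Fm \<and>
    restricts_to_Spec Fo Fm eta \<and> (\<forall>R. ring R \<longrightarrow> (\<exists>b. bij_betw b (Fo R) (Spec_set R)))"
  then obtain Fo :: "'u ring \<Rightarrow> 'v set" and Fm eta where F_functor: "contravariant_functor_Ring Fo Fm"
    and natural: "restricts_to_Spec Fo Fm eta"
    and bij: "\<And>R. ring R \<Longrightarrow> \<exists>b. bij_betw b (Fo R) (Spec_set R)" by blast
  obtain g :: "bit^3^3 \<Rightarrow> 'u" where "inj g" using inj_from_countable assms by blast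
  then have g: "inj_on g (carrier matrix_ring)" by (simp add: carrier_matrix_ring)
  let ?R = "image_ring g matrix_ring"
  have R: "ring ?R" using g by (rule ring.inj_imp_image_ring_is_ring[OF ring_matrix_ring])
  obtain x where x: "x \<in> Fo ?R"
    using bij[OF R] zero_ideal_in_Spec_set_image_matrix_ring[OF g] unfolding bij_betw_def by blast
  have "exactly_one (idempotent_value Fm eta ?R x (g A)) (idempotent_value Fm eta ?R x (g B))
      (idempotent_value Fm eta ?R x (g C))" if "(A, B, C) \<in> set KS_frames" for A B C
    using KS_frames_idempotent_frame that
    by (intro idempotent_value_exactly_one[OF F_functor natural x] idempotent_frame_image_ring[OF _ g]) blast
  then show False
    using KS_frames_no_exactly_one_valuation[of "\<lambda>A. idempotent_value Fm eta ?R x (g A)"] by blast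
qed

end
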